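(* Let $\alpha$ be irrational with $\ln2/\ln3<\alpha<1$ and write $1c_\alpha=s_0s_1s_2\cdots$. Then $\Phi_{\mathbb{R}}(1c_\alpha)$ and $\Phi_{\mathbb{R}}(0c_\alpha)$ exist, $\Phi_{\mathbb{R}}(0c_\alpha)=3\Phi_{\mathbb{R}}(1c_\alpha)+1$, and for every $L\ge0$ the number $\Phi_{\mathbb{R}}(s_Ls_{L+1}\cdots)$ exists and satisfies $$\Phi_{\mathbb{R}}(0c_\alpha)\le\Phi_{\mathbb{R}}(s_Ls_{L+1}\cdots)\le\Phi_{\mathbb{R}}(1c_\alpha).$$
   Context: For $0<\alpha<1$ the Sturmian words are $1c_\alpha=(\lceil(j+1)\alpha\rceil-\lceil j\alpha\rceil)_{j\ge0}$ and $0c_\alpha=(\lfloor(j+1)\alpha\rfloor-\lfloor j\alpha\rfloor)_{j\ge0}$. For an infinite $0$-$1$ word $w$ with $1$'s at positions $d_0<d_1<\cdots$, $\Phi_{\mathbb{R}}(w)$ is the real sum $-\sum_{i\ge0}2^{d_i}/3^{i+1}$, said to exist if the series converges. *)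

theory Defs
  imports "HOL-Analysis.Analysis" "HOL-Library.Infinite_Set"
begin

definition sturm1 :: "real \<Rightarrow> nat \<Rightarrow> nat" where
  "sturm1 \<alpha> j = nat (\<lceil>(real j + 1) * \<alpha>\<rceil> - \<lceil>real j * \<alpha>\<rceil>)"

definition sturm0 :: "real \<Rightarrow> nat \<Rightarrow> nat" where
  "sturm0 \<alpha> j = nat (\<lfloor>(real j + 1) * \<alpha>\<rfloor> - \<lfloor>real j * \<alpha>\<rfloor>)"

definition ones :: "(nat \<Rightarrow> nat) \<Rightarrow> nat set" where
  "ones w = {j. w j = 1}"

text \<open>i-th term 2^(d_i)/3^(i+1) of the series; zero beyond the last 1 when there are
  only finitely many 1's (so that the series is then the finite sum).\<close>
definition phi_term :: "(nat \<Rightarrow> nat) \<Rightarrow> nat \<Rightarrow> real" where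
  "phi_term w i = (if infinite (ones w) \<or> i < card (ones w)
     then 2 ^ (enumerate (ones w) i) / 3 ^ (i + 1) else 0)"

definition Phi_exists :: "(nat \<Rightarrow> nat) \<Rightarrow> bool" where
  "Phi_exists w \<longleftrightarrow> summable (phi_term w)"

definition PhiR :: "(nat \<Rightarrow> nat) \<Rightarrow> real" where
  "PhiR w = - (\<Sum>i. phi_term w i)"

end

theory Submission imports Defs begin

text \<open>
  For \<open>0 < \<alpha> < 1\<close> the \<open>i\<close>-th 1 of \<open>1c\<^sub>\<alpha>\<close> sits at \<open>d i = \<lfloor>i / \<alpha>\<rfloor>\<close>, so
  \<open>2 ^ d i \<le> (2 powr (1 / \<alpha>)) ^ i\<close> and the series converges once \<open>2 powr (1 / \<alpha>) < 3\<close>,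
  i.e. \<open>\<alpha> > ln 2 / ln 3\<close>. For irrational \<open>\<alpha>\<close> the word \<open>0c\<^sub>\<alpha>\<close> is \<open>1c\<^sub>\<alpha>\<close> with its
  first 1 (at \<open>d 0 = 0\<close>) removed, which gives \<open>\<Phi>(0c\<^sub>\<alpha>) = 3 \<Phi>(1c\<^sub>\<alpha>) + 1\<close>. The 1's of the
  suffix starting at \<open>L\<close> are at \<open>d (m + i) - L\<close> with \<open>m = \<lceil>L \<alpha>\<rceil>\<close>, and
  \<open>d i \<le> d (m + i) - L \<le> d (i + 1)\<close>. Since \<open>\<Phi>\<close> decreases when the 1's move to the right,
  the suffix lies between \<open>0c\<^sub>\<alpha>\<close> and \<open>1c\<^sub>\<alpha>\<close>.
\<close>

lemma enumerate_range_strict_mono: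
  fixes f :: "nat \<Rightarrow> nat"
  assumes "strict_mono f"
  shows "enumerate (range f) n = f n"
  using assms
proof (induction n arbitrary: f)
  case 0
  show ?case unfolding enumerate_0
    by (rule Least_equality) (auto simp: strict_mono_less_eq[OF 0])
next
  case (Suc n)
  have least: "(LEAST n. n \<in> range f) = f 0"
    by (rule Least_equality) (auto simp: strict_mono_less_eq[OF Suc.prems])
  have tail: "range f - {f 0} = range (\<lambda>i. f (Suc i))"
  proof safe
    fix x assume "f x \<notin> range (\<lambda>i. f (Suc i))"
    then show "f x = f 0" by (cases x) auto
  next
    fix x assume "f (Suc x) = f 0"
    then show False using strict_monoD[OF Suc.prems, of 0 "Suc x"] by simp
  qed auto
  have "strict_mono (\<lambda>i. f (Suc i))"
    using Suc.prems by (auto simp: strict_mono_def)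
  then show ?case unfolding enumerate_Suc least tail by (rule Suc.IH)
qed

lemma phi_term_eq:
  fixes f :: "nat \<Rightarrow> nat"
  assumes "strict_mono f" and "ones w = range f"
  shows "phi_term w i = 2 ^ f i / 3 ^ (i + 1)"
proof -
  have "infinite (range f)"
    using range_inj_infinite strict_mono_imp_inj_on[OF assms(1)] by blast
  then show ?thesis
    using assms enumerate_range_strict_mono by (simp add: phi_term_def)
qed

lemma Phi_exists_PhiR_antimono:
  fixes f g :: "nat \<Rightarrow> nat"
  assumes "strict_mono f" "ones v = range f" "strict_mono g" "ones w = range g"
    and le: "\<And>i. f i \<le> g i" and "Phi_exists w"
  shows "Phi_exists v \<and> PhiR w \<le> PhiR v"
proof -
  have terms_le: "phi_term v i \<le> phi_term w i" for i
    using power_increasing[OF le[of i], of "2::real"]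
    by (simp add: phi_term_eq[OF assms(1,2)] phi_term_eq[OF assms(3,4)] divide_right_mono)
  have w: "summable (phi_term w)" using \<open>Phi_exists w\<close> by (simp add: Phi_exists_def)
  have v: "summable (phi_term v)"
    by (rule summable_comparison_test'[OF w]) (use terms_le in \<open>simp add: phi_term_eq[OF assms(1,2)]\<close>)
  show ?thesis
    using suminf_le[OF terms_le v w] v by (simp add: Phi_exists_def PhiR_def)
qed

lemma Phi_exists_PhiR_drop_first_one:
  fixes f :: "nat \<Rightarrow> nat"
  assumes f: "strict_mono f" "f 0 = 0"
    and w: "ones w = range f" "Phi_exists w"
    and v: "ones v = range (\<lambda>i. f (Suc i))"
  shows "Phi_exists v \<and> PhiR v = 3 * PhiR w + 1"
proof -
  have "strict_mono (\<lambda>i. f (Suc i))"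
    using f(1) by (auto simp: strict_mono_def)
  then have v_terms: "phi_term v = (\<lambda>i. 3 * phi_term w (Suc i))"
    by (simp add: fun_eq_iff phi_term_eq[OF _ v] phi_term_eq[OF f(1) w(1)])
  have sw: "summable (phi_term w)" using w(2) by (simp add: Phi_exists_def)
  then have sv: "summable (phi_term v)"
    unfolding v_terms by (intro summable_mult) (simp add: summable_Suc_iff)
  have "phi_term w 0 = 1 / 3" by (simp add: phi_term_eq[OF f(1) w(1)] f(2))
  then have "(\<Sum>i. phi_term v i) = 3 * (\<Sum>i. phi_term w i) - 1"
    using suminf_mult[of "\<lambda>i. phi_term w (Suc i)" 3] suminf_split_head[OF sw] sw
    by (simp add: v_terms summable_Suc_iff)
  with sv show ?thesis by (simp add: Phi_exists_def PhiR_def)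
qed

lemma Phi_exists_if_linear_bound:
  fixes f :: "nat \<Rightarrow> nat" and c :: real
  assumes "strict_mono f" "ones w = range f"
    and bound: "\<And>i. real (f i) \<le> c * real i" and "2 powr c < 3"
  shows "Phi_exists w"
proof -
  let ?r = "2 powr c / 3"
  have geometric: "summable (\<lambda>i. (1 / 3) * ?r ^ i)"
    using \<open>2 powr c < 3\<close> by (intro summable_mult summable_geometric) simp
  show ?thesis unfolding Phi_exists_def
  proof (rule summable_comparison_test'[OF geometric])
    fix i
    have "(2::real) ^ f i = 2 powr real (f i)" by (simp add: powr_realpow)
    also have "\<dots> \<le> 2 powr (c * real i)" by (rule powr_mono) (use bound in auto)
    also have "\<dots> = (2 powr c) ^ i" by (simp add: powr_powr[symmetric] powr_realpow)
    finally have "(2::real) ^ f i / 3 ^ (i + 1) \<le> (1 / 3) * ?r ^ i"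
      by (simp add: power_divide divide_right_mono)
    then show "norm (phi_term w i) \<le> (1 / 3) * ?r ^ i"
      by (simp add: phi_term_eq[OF assms(1,2)])
  qed
qed

definition beatty :: "real \<Rightarrow> nat \<Rightarrow> nat" where
  "beatty a i = nat \<lfloor>real i / a\<rfloor>"

lemma beatty_0 [simp]: "beatty a 0 = 0"
  by (simp add: beatty_def)

lemma int_beatty: "0 < a \<Longrightarrow> int (beatty a i) = \<lfloor>real i / a\<rfloor>"
  by (simp add: beatty_def)

lemma beatty_eq_iff:
  assumes "0 < a"
  shows "beatty a i = j \<longleftrightarrow> real j * a \<le> real i \<and> real i < (real j + 1) * a"
proof -
  have "beatty a i = j \<longleftrightarrow> \<lfloor>real i / a\<rfloor> = int j"
    by (metis int_beatty[OF assms] of_nat_eq_iff)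
  also have "\<dots> \<longleftrightarrow> real j \<le> real i / a \<and> real i / a < real j + 1"
    by (simp add: floor_eq_iff)
  also have "\<dots> \<longleftrightarrow> real j * a \<le> real i \<and> real i < (real j + 1) * a"
    using assms by (simp add: pos_le_divide_eq pos_divide_less_eq)
  finally show ?thesis .
qed

lemma strict_mono_beatty:
  assumes "0 < a" "a \<le> 1"
  shows "strict_mono (beatty a)"
proof (rule strict_monoI_Suc)
  fix i
  have "real (Suc i) / a = real i / a + 1 / a" by (simp add: add_divide_distrib)
  moreover have "1 \<le> 1 / a" using assms by simp
  ultimately have "\<lfloor>real i / a + 1\<rfloor> \<le> \<lfloor>real (Suc i) / a\<rfloor>"
    by (intro floor_mono) linarith
  then have "\<lfloor>real i / a\<rfloor> < \<lfloor>real (Suc i) / a\<rfloor>" by simp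
  then show "beatty a i < beatty a (Suc i)"
    by (metis int_beatty[OF assms(1)] of_nat_less_iff)
qed

lemma ones_sturm1:
  assumes "0 < a" "a \<le> 1"
  shows "ones (sturm1 a) = range (beatty a)"
proof (intro set_eqI)
  fix j
  have "(real j + 1) * a \<le> real j * a + 1" using assms by (simp add: algebra_simps)
  from ceiling_mono[OF this] have up: "\<lceil>(real j + 1) * a\<rceil> \<le> \<lceil>real j * a\<rceil> + 1" by simp
  have "0 \<le> real j * a" using assms by simp
  then have nonneg: "0 \<le> \<lceil>real j * a\<rceil>" by simp
  have "j \<in> ones (sturm1 a) \<longleftrightarrow> \<lceil>real j * a\<rceil> < \<lceil>(real j + 1) * a\<rceil>"
    using up nonneg by (auto simp: ones_def sturm1_def)
  also have "\<dots> \<longleftrightarrow> (\<exists>i::nat. real j * a \<le> real i \<and> real i < (real j + 1) * a)"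
  proof
    assume "\<lceil>real j * a\<rceil> < \<lceil>(real j + 1) * a\<rceil>"
    then show "\<exists>i::nat. real j * a \<le> real i \<and> real i < (real j + 1) * a"
      using nonneg by (intro exI[of _ "nat \<lceil>real j * a\<rceil>"]) (simp add: less_ceiling_iff)
  next
    assume "\<exists>i::nat. real j * a \<le> real i \<and> real i < (real j + 1) * a"
    then obtain i :: nat where "real j * a \<le> real i" "real i < (real j + 1) * a" by blast
    then have "\<lceil>real j * a\<rceil> \<le> int i" "int i < \<lceil>(real j + 1) * a\<rceil>"
      by (simp_all add: ceiling_le_iff less_ceiling_iff)
    then show "\<lceil>real j * a\<rceil> < \<lceil>(real j + 1) * a\<rceil>" by linarith
  qed
  also have "\<dots> \<longleftrightarrow> j \<in> range (beatty a)"
    by (auto simp: image_iff beatty_eq_iff[OF assms(1)] eq_commute[of j])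
  finally show "j \<in> ones (sturm1 a) \<longleftrightarrow> j \<in> range (beatty a)" .
qed

lemma sturm0_eq_sturm1:
  assumes "a \<notin> \<rat>" "0 < a" "a < 1"
  shows "sturm0 a j = (if j = 0 then 0 else sturm1 a j)"
proof -
  have ceiling_eq: "\<lceil>real n * a\<rceil> = \<lfloor>real n * a\<rfloor> + 1" if "0 < n" for n :: nat
  proof -
    have "real n * a \<notin> \<int>"
    proof
      assume "real n * a \<in> \<int>"
      then obtain k where "real n * a = of_int k" by (auto elim: Ints_cases)
      then have "a = of_int k / real n" using that by (simp add: field_simps)
      then show False using assms(1) by simp
    qed
    then show ?thesis unfolding ceiling_altdef by (metis Ints_of_int)
  qed
  show ?thesis
  proof (cases "j = 0")
    case True
    have "\<lfloor>a\<rfloor> = 0" using assms by (simp add: floor_eq_iff)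
    with True show ?thesis by (simp add: sturm0_def)
  next
    case False
    then show ?thesis
      using ceiling_eq[of j] ceiling_eq[of "Suc j"] by (simp add: sturm0_def sturm1_def add.commute)
  qed
qed

lemma ones_sturm0:
  assumes "a \<notin> \<rat>" "0 < a" "a < 1"
  shows "ones (sturm0 a) = range (\<lambda>i. beatty a (Suc i))"
proof -
  have mono: "strict_mono (beatty a)" using strict_mono_beatty assms by simp
  have "ones (sturm0 a) = range (beatty a) - {0}"
    using ones_sturm1[of a] sturm0_eq_sturm1[OF assms] assms by (auto simp: ones_def)
  also have "\<dots> = range (\<lambda>i. beatty a (Suc i))"
  proof safe
    fix k assume "beatty a k \<notin> range (\<lambda>i. beatty a (Suc i))"
    then show "beatty a k = 0" by (cases k) auto
  next
    fix k assume "beatty a (Suc k) = 0"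
    then show False using strict_monoD[OF mono, of 0 "Suc k"] by simp
  qed auto
  finally show ?thesis .
qed

text \<open>\<open>nat \<lceil>L * a\<rceil>\<close> is the number of 1's of \<open>sturm1 a\<close> before position \<open>L\<close>.\<close>

lemma beatty_less_if_less_ceiling:
  assumes "0 < a" "k < nat \<lceil>real L * a\<rceil>"
  shows "beatty a k < L"
proof -
  have "real k < real L * a" using assms by linarith
  then have "\<lfloor>real k / a\<rfloor> < int L" using assms(1) by (simp add: floor_less_iff pos_divide_less_eq)
  then show ?thesis using int_beatty[OF assms(1), of k] by linarith
qed

lemma beatty_add_ceiling_lower:
  assumes "0 < a"
  shows "beatty a i + L \<le> beatty a (nat \<lceil>real L * a\<rceil> + i)"
proof -
  have "real L * a \<le> real (nat \<lceil>real L * a\<rceil>)" by linarith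
  then have "real L \<le> real (nat \<lceil>real L * a\<rceil>) / a" using assms by (simp add: pos_le_divide_eq)
  then have "\<lfloor>real i / a\<rfloor> + int L \<le> \<lfloor>real (nat \<lceil>real L * a\<rceil> + i) / a\<rfloor>"
    by (subst le_floor_iff) (simp add: add_divide_distrib, linarith)
  then show ?thesis using int_beatty[OF assms] by (metis of_nat_add of_nat_le_iff)
qed

lemma beatty_add_ceiling_upper:
  assumes "0 < a"
  shows "beatty a (nat \<lceil>real L * a\<rceil> + i) \<le> beatty a (Suc i) + L"
proof -
  have "real L * a \<ge> 0" using assms by simp
  then have "real (nat \<lceil>real L * a\<rceil>) - 1 < real L * a" by linarith
  then have "(real (nat \<lceil>real L * a\<rceil>) - 1) / a < real L" using assms by (simp add: pos_divide_less_eq)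
  moreover have "real (nat \<lceil>real L * a\<rceil> + i) / a = real (Suc i) / a + (real (nat \<lceil>real L * a\<rceil>) - 1) / a"
    by (simp add: add_divide_distrib diff_divide_distrib)
  ultimately have "\<lfloor>real (nat \<lceil>real L * a\<rceil> + i) / a\<rfloor> \<le> \<lfloor>real (Suc i) / a\<rfloor> + int L"
    by (subst floor_le_iff) linarith
  then show ?thesis using int_beatty[OF assms] by (metis of_nat_add of_nat_le_iff)
qed

lemma ones_sturm1_suffix:
  assumes "0 < a" "a \<le> 1"
  shows "ones (\<lambda>j. sturm1 a (L + j)) = range (\<lambda>i. beatty a (nat \<lceil>real L * a\<rceil> + i) - L)"
proof (intro set_eqI iffI)
  fix j assume "j \<in> ones (\<lambda>j. sturm1 a (L + j))"
  then obtain k where k: "L + j = beatty a k" using ones_sturm1[OF assms] by (auto simp: ones_def)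
  then have "\<not> k < nat \<lceil>real L * a\<rceil>"
    using beatty_less_if_less_ceiling[OF assms(1), of k L] by linarith
  then obtain i where "k = nat \<lceil>real L * a\<rceil> + i" using le_iff_add by (metis not_less)
  with k have "j = beatty a (nat \<lceil>real L * a\<rceil> + i) - L" by simp
  then show "j \<in> range (\<lambda>i. beatty a (nat \<lceil>real L * a\<rceil> + i) - L)" by blast
next
  fix j assume "j \<in> range (\<lambda>i. beatty a (nat \<lceil>real L * a\<rceil> + i) - L)"
  then obtain i where "j = beatty a (nat \<lceil>real L * a\<rceil> + i) - L" by auto
  then have "L + j = beatty a (nat \<lceil>real L * a\<rceil> + i)"
    using beatty_add_ceiling_lower[OF assms(1), of i L] by simp
  then show "j \<in> ones (\<lambda>j. sturm1 a (L + j))"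
    using ones_sturm1[OF assms] by (auto simp: ones_def)
qed

lemma strict_mono_beatty_suffix:
  assumes "0 < a" "a \<le> 1"
  shows "strict_mono (\<lambda>i. beatty a (nat \<lceil>real L * a\<rceil> + i) - L)"
proof (rule strict_monoI_Suc)
  fix i
  let ?m = "nat \<lceil>real L * a\<rceil>"
  have "beatty a (?m + i) < beatty a (?m + Suc i)"
    using strict_mono_beatty[OF assms] by (simp add: strict_mono_def)
  moreover have "L \<le> beatty a (?m + i)"
    using beatty_add_ceiling_lower[OF assms(1), of i L] by simp
  ultimately show "beatty a (?m + i) - L < beatty a (?m + Suc i) - L" by simp
qed

lemma Phi_exists_sturm1:
  assumes "ln 2 / ln 3 < a" "a \<le> 1"
  shows "Phi_exists (sturm1 a)"
proof -
  have "(0::real) < ln 2 / ln 3" by simp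
  with assms(1) have "0 < a" by linarith
  have "ln 2 < a * ln 3" using assms(1) by (simp add: pos_divide_less_eq mult.commute)
  then have "1 / a * ln 2 < ln 3" using \<open>0 < a\<close> by (simp add: field_simps)
  then have "2 powr (1 / a) < 3" by (simp add: powr_def mult.commute ln_less_cancel_iff[symmetric])
  moreover have "real (beatty a i) \<le> 1 / a * real i" for i
    using int_beatty[OF \<open>0 < a\<close>, of i] by (simp, linarith)
  ultimately show ?thesis
    using Phi_exists_if_linear_bound strict_mono_beatty ones_sturm1 \<open>0 < a\<close> assms(2) by blast
qed

lemma Phi_exists_PhiR_sturm0:
  assumes "a \<notin> \<rat>" "0 < a" "a < 1" and "Phi_exists (sturm1 a)"
  shows "Phi_exists (sturm0 a) \<and> PhiR (sturm0 a) = 3 * PhiR (sturm1 a) + 1"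
  using Phi_exists_PhiR_drop_first_one[OF strict_mono_beatty beatty_0 ones_sturm1 _ ones_sturm0]
    assms by simp

lemma Phi_exists_PhiR_sturm1_suffix:
  assumes "a \<notin> \<rat>" "0 < a" "a < 1" and "Phi_exists (sturm0 a)"
  shows "Phi_exists (\<lambda>j. sturm1 a (L + j))
    \<and> PhiR (sturm0 a) \<le> PhiR (\<lambda>j. sturm1 a (L + j))
    \<and> PhiR (\<lambda>j. sturm1 a (L + j)) \<le> PhiR (sturm1 a)"
proof -
  have pos: "0 < a" "a \<le> 1" using assms(2,3) by simp_all
  let ?d = "\<lambda>i. beatty a (nat \<lceil>real L * a\<rceil> + i) - L"
  have mono: "strict_mono (beatty a)" "strict_mono (\<lambda>i. beatty a (Suc i))"
    using strict_mono_beatty[OF pos] by (auto simp: strict_mono_def)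
  note suffix = strict_mono_beatty_suffix[OF pos, of L] ones_sturm1_suffix[OF pos, of L]
  have lower: "beatty a i \<le> ?d i" for i
    using beatty_add_ceiling_lower[OF pos(1), of i L] by simp
  have upper: "?d i \<le> beatty a (Suc i)" for i
    using beatty_add_ceiling_upper[OF pos(1), of L i] by simp
  have "Phi_exists (\<lambda>j. sturm1 a (L + j)) \<and> PhiR (sturm0 a) \<le> PhiR (\<lambda>j. sturm1 a (L + j))"
    by (rule Phi_exists_PhiR_antimono[OF suffix mono(2) ones_sturm0[OF assms(1-3)] upper assms(4)])
  moreover from this have "PhiR (\<lambda>j. sturm1 a (L + j)) \<le> PhiR (sturm1 a)"
    using Phi_exists_PhiR_antimono[OF mono(1) ones_sturm1[OF pos] suffix lower] by blast
  ultimately show ?thesis by blast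
qed

theorem lemma25:
  fixes \<alpha> :: real
  assumes "\<alpha> \<notin> \<rat>" and "ln 2 / ln 3 < \<alpha>" and "\<alpha> < 1"
  shows "Phi_exists (sturm1 \<alpha>) \<and> Phi_exists (sturm0 \<alpha>)
    \<and> PhiR (sturm0 \<alpha>) = 3 * PhiR (sturm1 \<alpha>) + 1
    \<and> (\<forall>L::nat. Phi_exists (\<lambda>j. sturm1 \<alpha> (L + j))
         \<and> PhiR (sturm0 \<alpha>) \<le> PhiR (\<lambda>j. sturm1 \<alpha> (L + j))
         \<and> PhiR (\<lambda>j. sturm1 \<alpha> (L + j)) \<le> PhiR (sturm1 \<alpha>))"
proof -
  have "(0::real) < ln 2 / ln 3" by simp
  with assms(2) have "0 < \<alpha>" by linarith
  have sturm1: "Phi_exists (sturm1 \<alpha>)"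
    using Phi_exists_sturm1 assms(2,3) by simp
  have sturm0: "Phi_exists (sturm0 \<alpha>) \<and> PhiR (sturm0 \<alpha>) = 3 * PhiR (sturm1 \<alpha>) + 1"
    using Phi_exists_PhiR_sturm0[OF assms(1) \<open>0 < \<alpha>\<close> assms(3) sturm1] .
  show ?thesis
    using sturm1 sturm0 Phi_exists_PhiR_sturm1_suffix[OF assms(1) \<open>0 < \<alpha>\<close> assms(3)] by blast
qed

end
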